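(* Fix $k\in\mathbb{N}$ and let $\alpha=\alpha(n)\in(0,\infty)$. If $\alpha\to\infty$ and $\alpha/\sqrt{n}\to 0$ as $n\to\infty$, then $d_{TV}(M_{n,k}^{\alpha},M_{n,k}^{\infty})\to 1$ as $n\to\infty$.
   Context: A $k$-out map on $[n]$ is a map $M:[n]\to[n]^k$, viewed as a digraph on $[n]$ in which each vertex has $k$ out-arcs labeled $1,\dots,k$; $\mathcal{M}_{n,k}$ denotes the set of all such maps. The in-degree $d_j$ of vertex $j$ is the total number of coordinates, over all vertices $i$ and all $k$ labels, of $M(i)$ equal to $j$ (so $d_1+\dots+d_n=kn$). For $\alpha\in(0,\infty)$, the random $k$-out map $M_{n,k}^{\alpha}$ is generated by inserting $kn$ out-arcs, $k$ per vertex: every vertex starts with weight $\alpha$; at each step a vertex whose out-degree is below $k$ picks its next image $j$ with probability proportional to the current weight of $j$, and the weight of $j$ then increases by $1$. Its law is $P(M_{n,k}^{\alpha}=M)=\prod_{j=1}^n \alpha^{\overline{d_j}}/(\alpha n)^{\overline{kn}}$, where $(d_1,\dots,d_n)$ is the in-degree sequence of $M$ and $x^{\overline{y}}=x(x+1)\cdots(x+y-1)$. $M_{n,k}^{\infty}$ denotes the uniformly random element of $\mathcal{M}_{n,k}$ (probability $n^{-kn}$ each). $d_{TV}(M_{n,k}^{\alpha},M_{n,k}^{\infty})=\sup_{\mathcal{A}\subseteq\mathcal{M}_{n,k}}|P(M_{n,k}^{\alpha}\in\mathcal{A})-P(M_{n,k}^{\infty}\in\mathcal{A})|$. *)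

theory Defs
  imports "HOL-Analysis.Analysis"
begin

text \<open>k-out maps on [n] = {1..n}: M i l is the l-th image of vertex i
  (i in {1..n}, l in {1..k}); extensional outside this domain.\<close>
definition kout_maps :: "nat \<Rightarrow> nat \<Rightarrow> (nat \<Rightarrow> nat \<Rightarrow> nat) set" where
  "kout_maps n k = ({1..n} \<rightarrow>\<^sub>E ({1..k} \<rightarrow>\<^sub>E {1..n}))"

definition indeg :: "nat \<Rightarrow> nat \<Rightarrow> (nat \<Rightarrow> nat \<Rightarrow> nat) \<Rightarrow> nat \<Rightarrow> nat" where
  "indeg n k M j = card {(i, l). i \<in> {1..n} \<and> l \<in> {1..k} \<and> M i l = j}"

text \<open>Law of the random k-out map with parameter alpha
  (pochhammer x y = rising factorial x(x+1)...(x+y-1)).\<close>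
definition prob_alpha :: "nat \<Rightarrow> nat \<Rightarrow> real \<Rightarrow> (nat \<Rightarrow> nat \<Rightarrow> nat) \<Rightarrow> real" where
  "prob_alpha n k \<alpha> M =
     (\<Prod>j\<in>{1..n}. pochhammer \<alpha> (indeg n k M j)) / pochhammer (\<alpha> * real n) (k * n)"

definition prob_unif :: "nat \<Rightarrow> nat \<Rightarrow> (nat \<Rightarrow> nat \<Rightarrow> nat) \<Rightarrow> real" where
  "prob_unif n k M = 1 / real n ^ (k * n)"

definition dTV :: "nat \<Rightarrow> nat \<Rightarrow> real \<Rightarrow> real" where
  "dTV n k \<alpha> = Sup {\<bar>(\<Sum>M\<in>A. prob_alpha n k \<alpha> M) - (\<Sum>M\<in>A. prob_unif n k M)\<bar> | A.
                       A \<subseteq> kout_maps n k}"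

end

theory Submission
  imports Defs
begin

text \<open>Let T(M) = sum_j d_j (d_j - 1) count the ordered pairs of arcs with a common head.
  Both laws are urn models in which every vertex starts with weight a and gains weight \<theta> whenever
  it is chosen: \<theta> = 1 gives the law of M_{n,k}^\<alpha> (with a = \<alpha>), \<theta> = 0 the uniform law. For such
  urns the mixed falling-factorial moments of the in-degrees have a closed form, obtained by adding
  the balls one at a time. It follows that the mean of T under M_{n,k}^\<alpha> exceeds the uniform one by
  at least k^2 n / (8 \<alpha>), while both variances are at most 52 k^4 n. By Chebyshev's inequality,
  the event that T lies above the midpoint of the two means has probability at least
  1 - O(\<alpha>^2 / n) under M_{n,k}^\<alpha> and at most O(\<alpha>^2 / n) under the uniform law.\<close>

section \<open>Occupancy numbers, step factorials and falling factorials\<close>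

definition occupancy :: "'s set \<Rightarrow> ('s \<Rightarrow> 'v) \<Rightarrow> 'v \<Rightarrow> nat" where
  "occupancy S f j = card {s \<in> S. f s = j}"

lemma sum_occupancy:
  assumes "finite S" "finite V" "f \<in> S \<rightarrow>\<^sub>E V"
  shows "(\<Sum>j\<in>V. occupancy S f j) = card S"
proof -
  have "(\<Sum>j\<in>V. occupancy S f j) = (\<Sum>j\<in>V. \<Sum>s\<in>{s\<in>S. f s = j}. 1)"
    by (simp add: occupancy_def)
  also have "\<dots> = (\<Sum>s\<in>S. 1)"
    by (rule sum.group) (use assms in auto)
  finally show ?thesis by simp
qed

lemma occupancy_insert_update:
  assumes "finite S" "s \<notin> S"
  shows "occupancy (insert s S) (g(s := y)) j = occupancy S g j + (if y = j then 1 else 0)"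
proof -
  have "{x \<in> insert s S. (g(s := y)) x = j} =
        (if y = j then insert s {x \<in> S. g x = j} else {x \<in> S. g x = j})"
    using assms by auto
  then show ?thesis
    using assms by (simp add: occupancy_def)
qed

definition pochhammer_step :: "real \<Rightarrow> real \<Rightarrow> nat \<Rightarrow> real" where
  "pochhammer_step \<theta> x c = (\<Prod>i<c. x + \<theta> * real i)"

lemma pochhammer_step_0 [simp]: "pochhammer_step \<theta> x 0 = 1"
  by (simp add: pochhammer_step_def)

lemma pochhammer_step_Suc:
  "pochhammer_step \<theta> x (Suc c) = pochhammer_step \<theta> x c * (x + \<theta> * real c)"
  by (simp add: pochhammer_step_def)

lemma pochhammer_step_one: "pochhammer_step 1 x c = pochhammer x c"
  by (simp add: pochhammer_step_def pochhammer_prod atLeast0LessThan)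

lemma pochhammer_step_zero: "pochhammer_step 0 x c = x ^ c"
  by (simp add: pochhammer_step_def)

lemma pochhammer_step_add:
  "pochhammer_step \<theta> x (c + d) = pochhammer_step \<theta> x c * pochhammer_step \<theta> (x + \<theta> * real c) d"
  by (induction d) (simp_all add: pochhammer_step_Suc algebra_simps)

lemma pochhammer_step_nonneg:
  "x \<ge> 0 \<Longrightarrow> \<theta> \<ge> 0 \<Longrightarrow> pochhammer_step \<theta> x c \<ge> 0"
  unfolding pochhammer_step_def by (intro prod_nonneg) simp

lemma pochhammer_step_pos:
  "x > 0 \<Longrightarrow> \<theta> \<ge> 0 \<Longrightarrow> pochhammer_step \<theta> x c > 0"
  unfolding pochhammer_step_def by (intro prod_pos) (simp add: add_pos_nonneg)

lemma pochhammer_step_ratio_le: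
  assumes "0 \<le> \<theta>" "\<theta> \<le> a" "a > 0" "n \<ge> 1"
  shows "pochhammer_step \<theta> a r / pochhammer_step \<theta> (a * n) r \<le> fact r / real n ^ r"
proof -
  have a_pos: "a * n > 0"
    using assms by simp
  have factor: "(a + \<theta> * i) / (a * n + \<theta> * i) \<le> (1 + real i) / n" for i :: nat
  proof -
    have "\<theta> * i * n \<le> a * i * n" "0 \<le> \<theta> * i" "0 \<le> \<theta> * i * i"
      using assms by (auto intro!: mult_right_mono)
    then have "(a + \<theta> * i) * n \<le> (1 + real i) * (a * n + \<theta> * i)"
      by (simp add: algebra_simps)
    then show ?thesis
      using assms a_pos by (simp add: divide_simps add_pos_nonneg mult_ac)
  qed
  have "pochhammer_step \<theta> a r / pochhammer_step \<theta> (a * n) r = (\<Prod>i<r. (a + \<theta> * i) / (a * n + \<theta> * i))"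
    by (simp add: pochhammer_step_def prod_dividef)
  also have "\<dots> \<le> (\<Prod>i<r. (1 + real i) / n)"
    using assms a_pos factor by (intro prod_mono conjI divide_nonneg_pos add_pos_nonneg) auto
  also have "\<dots> = fact r / real n ^ r"
    by (simp add: prod_dividef fact_prod_Suc atLeast0LessThan add.commute)
  finally show ?thesis .
qed

lemma pochhammer_step_2_square_le:
  assumes "X \<ge> 0" "\<theta> \<ge> 0"
  shows "pochhammer_step \<theta> X 2 ^ 2 \<le> pochhammer_step \<theta> X 4"
proof -
  have "X * (X + \<theta>) * (X * (X + \<theta>)) \<le> X * (X + \<theta>) * ((X + 2 * \<theta>) * (X + 3 * \<theta>))"
    using assms by (intro mult_left_mono mult_mono) auto
  then show ?thesis
    by (simp add: pochhammer_step_def eval_nat_numeral power2_eq_square mult_ac)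
qed

definition falling_factorial :: "real \<Rightarrow> nat \<Rightarrow> real" where
  "falling_factorial x r = (\<Prod>i<r. x - real i)"

lemma falling_factorial_0 [simp]: "falling_factorial x 0 = 1"
  by (simp add: falling_factorial_def)

lemma falling_factorial_Suc:
  "falling_factorial x (Suc r) = falling_factorial x r * (x - real r)"
  by (simp add: falling_factorial_def)

lemma falling_factorial_Suc_left:
  "falling_factorial (x + 1) (Suc r) = (x + 1) * falling_factorial x r"
  unfolding falling_factorial_def prod.lessThan_Suc_shift by simp

lemma falling_factorial_eq_0:
  assumes "m < r" shows "falling_factorial (real m) r = 0"
  unfolding falling_factorial_def by (rule prod_zero) (use assms in auto)

lemma falling_factorial_nonneg: "falling_factorial (real m) r \<ge> 0"
proof (induction r)
  case (Suc r)
  then show ?case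
    by (cases "r \<le> m") (auto simp: falling_factorial_Suc falling_factorial_eq_0)
qed simp

lemma falling_factorial_le_power: "falling_factorial (real m) r \<le> real m ^ r"
proof (cases "r \<le> m")
  case True
  then have "(\<Prod>i<r. real m - real i) \<le> (\<Prod>i<r. real m)"
    by (intro prod_mono) auto
  then show ?thesis
    by (simp add: falling_factorial_def)
qed (simp add: falling_factorial_eq_0)

lemma falling_factorial_4_le_square: "falling_factorial (real m) 4 \<le> falling_factorial (real m) 2 ^ 2"
proof (cases "m \<ge> 4")
  case True
  have "(real m - 2) * (real m - 3) \<le> real m * (real m - 1)"
    using True by (simp add: algebra_simps)
  then have "falling_factorial (real m) 2 * ((real m - 2) * (real m - 3))
      \<le> falling_factorial (real m) 2 * (real m * (real m - 1))"
    using falling_factorial_nonneg by (rule mult_left_mono)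
  then show ?thesis
    by (simp add: falling_factorial_def eval_nat_numeral power2_eq_square mult_ac)
qed (simp add: falling_factorial_eq_0 falling_factorial_nonneg)

lemma falling_factorial_add_one_weight:
  fixes \<theta> x :: real
  shows "(x + \<theta> * c) * falling_factorial (real (c + 1)) r
       = (x + \<theta> * c + \<theta> * r) * falling_factorial c r + r * (x + \<theta> * real (r - 1)) * falling_factorial c (r - 1)"
proof (cases r)
  case (Suc q)
  have "falling_factorial (real c + 1) (Suc q) = (real c + 1) * falling_factorial c q"
    by (rule falling_factorial_Suc_left)
  then show ?thesis
    using Suc by (simp add: falling_factorial_Suc algebra_simps)
qed simp

lemma falling_factorial_2_square:
  "falling_factorial x 2 * falling_factorial x 2 = falling_factorial x 4 + 4 * falling_factorial x 3 + 2 * falling_factorial x 2"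
  by (simp add: falling_factorial_def eval_nat_numeral algebra_simps)

section \<open>Factorial moments of urn occupancies\<close>

lemma sum_PiE_insert:
  assumes "s \<notin> S"
  shows "(\<Sum>f\<in>insert s S \<rightarrow>\<^sub>E V. F f) = (\<Sum>y\<in>V. \<Sum>g\<in>S \<rightarrow>\<^sub>E V. F (g(s := y)))"
proof -
  have "(\<Sum>f\<in>insert s S \<rightarrow>\<^sub>E V. F f) = (\<Sum>(y, g)\<in>V \<times> (S \<rightarrow>\<^sub>E V). F (g(s := y)))"
    unfolding PiE_insert_eq
    by (subst sum.reindex) (use inj_combinator[OF assms, of "\<lambda>_. V"] in \<open>auto simp: case_prod_beta\<close>)
  then show ?thesis
    by (simp add: sum.cartesian_product)
qed

lemma pochhammer_step_falling_factorial_bump: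
  fixes \<theta> :: real and x :: "'v \<Rightarrow> real" and c r :: "'v \<Rightarrow> nat" and y :: 'v
  defines "c' \<equiv> \<lambda>j. c j + (if y = j then 1 else 0)"
  assumes "finite V" "y \<in> V"
  shows "(\<Prod>j\<in>V. pochhammer_step \<theta> (x j) (c' j)) * (\<Prod>j\<in>V. falling_factorial (c' j) (r j))
       = (\<Prod>j\<in>V. pochhammer_step \<theta> (x j) (c j)) *
         ((x y + \<theta> * c y + \<theta> * r y) * (\<Prod>j\<in>V. falling_factorial (c j) (r j))
          + r y * (x y + \<theta> * real (r y - 1)) * (\<Prod>j\<in>V. falling_factorial (c j) ((r(y := r y - 1)) j)))"
proof -
  let ?W = "\<Prod>j\<in>V. pochhammer_step \<theta> (x j) (c j)"
  let ?P = "\<Prod>j\<in>V - {y}. falling_factorial (c j) (r j)"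
  have c'_y: "c' y = Suc (c y)"
    by (simp add: c'_def)
  have c'_other: "\<And>j. j \<in> V - {y} \<Longrightarrow> c' j = c j"
    by (auto simp: c'_def)
  have "(\<Prod>j\<in>V - {y}. pochhammer_step \<theta> (x j) (c' j)) = (\<Prod>j\<in>V - {y}. pochhammer_step \<theta> (x j) (c j))"
    "(\<Prod>j\<in>V - {y}. falling_factorial (c' j) (r j)) = ?P"
    by (simp_all add: c'_other)
  then have weight: "(\<Prod>j\<in>V. pochhammer_step \<theta> (x j) (c' j)) = ?W * (x y + \<theta> * c y)"
    and falling: "(\<Prod>j\<in>V. falling_factorial (c' j) (r j)) = falling_factorial (c y + 1) (r y) * ?P"
    using assms(2,3) by (simp_all add: prod.remove c'_y pochhammer_step_Suc mult_ac)
  have falling_r: "(\<Prod>j\<in>V. falling_factorial (c j) (r j)) = falling_factorial (c y) (r y) * ?P"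
    and falling_r': "(\<Prod>j\<in>V. falling_factorial (c j) ((r(y := r y - 1)) j)) = falling_factorial (c y) (r y - 1) * ?P"
    using assms(2,3) by (simp_all add: prod.remove)
  have "(\<Prod>j\<in>V. pochhammer_step \<theta> (x j) (c' j)) * (\<Prod>j\<in>V. falling_factorial (c' j) (r j))
      = ?W * ((x y + \<theta> * c y) * falling_factorial (c y + 1) (r y)) * ?P"
    by (simp only: weight falling mult_ac)
  also have "\<dots> = ?W * ((x y + \<theta> * c y + \<theta> * r y) * (falling_factorial (c y) (r y) * ?P)
        + r y * (x y + \<theta> * real (r y - 1)) * (falling_factorial (c y) (r y - 1) * ?P))"
    unfolding falling_factorial_add_one_weight by (simp add: algebra_simps)
  finally show ?thesis
    by (simp only: falling_r falling_r')
qed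

text \<open>Balls S are placed into urns V, and an urn j holding c balls has weight
  pochhammer_step \<theta> (x j) c; this is the unnormalised mixed falling-factorial moment of the
  occupancies of order r.\<close>
definition urn_moment :: "real \<Rightarrow> ('v \<Rightarrow> real) \<Rightarrow> 'v set \<Rightarrow> 's set \<Rightarrow> ('v \<Rightarrow> nat) \<Rightarrow> real" where
  "urn_moment \<theta> x V S r = (\<Sum>f\<in>S \<rightarrow>\<^sub>E V. (\<Prod>j\<in>V. pochhammer_step \<theta> (x j) (occupancy S f j))
                                          * (\<Prod>j\<in>V. falling_factorial (occupancy S f j) (r j)))"

lemma urn_moment_insert:
  fixes \<theta> :: real and x :: "'v \<Rightarrow> real" and r :: "'v \<Rightarrow> nat"
  assumes "finite S" "finite V" "s \<notin> S"
  shows "urn_moment \<theta> x V (insert s S) r = (sum x V + \<theta> * card S + \<theta> * sum r V) * urn_moment \<theta> x V S r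
     + (\<Sum>y\<in>V. r y * (x y + \<theta> * real (r y - 1)) * urn_moment \<theta> x V S (r(y := r y - 1)))"
proof -
  let ?W = "\<lambda>g. \<Prod>j\<in>V. pochhammer_step \<theta> (x j) (occupancy S g j)"
  let ?\<Phi> = "\<lambda>r g. \<Prod>j\<in>V. falling_factorial (occupancy S g j) (r j)"
  have occ: "\<And>g y j. occupancy (insert s S) (g(s := y)) j = occupancy S g j + (if y = j then 1 else 0)"
    using assms(1,3) by (rule occupancy_insert_update)
  have total: "(\<Sum>y\<in>V. x y + \<theta> * occupancy S g y + \<theta> * r y) = sum x V + \<theta> * card S + \<theta> * sum r V"
    if "g \<in> S \<rightarrow>\<^sub>E V" for g
    using sum_occupancy[OF assms(1,2) that] by (simp add: sum.distrib flip: sum_distrib_left of_nat_sum)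
  have "urn_moment \<theta> x V (insert s S) r = (\<Sum>y\<in>V. \<Sum>g\<in>S \<rightarrow>\<^sub>E V. ?W g *
          ((x y + \<theta> * occupancy S g y + \<theta> * r y) * ?\<Phi> r g
           + r y * (x y + \<theta> * real (r y - 1)) * ?\<Phi> (r(y := r y - 1)) g))"
    unfolding urn_moment_def sum_PiE_insert[OF assms(3)] occ
    by (intro sum.cong refl pochhammer_step_falling_factorial_bump assms(2))
  also have "\<dots> = (\<Sum>g\<in>S \<rightarrow>\<^sub>E V. ?W g * ?\<Phi> r g * (\<Sum>y\<in>V. x y + \<theta> * occupancy S g y + \<theta> * r y))
      + (\<Sum>y\<in>V. r y * (x y + \<theta> * real (r y - 1)) * urn_moment \<theta> x V S (r(y := r y - 1)))"
    unfolding urn_moment_def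
    by (simp add: sum.distrib algebra_simps sum_distrib_left sum_distrib_right sum.swap[of _ V])
  also have "(\<Sum>g\<in>S \<rightarrow>\<^sub>E V. ?W g * ?\<Phi> r g * (\<Sum>y\<in>V. x y + \<theta> * occupancy S g y + \<theta> * r y))
      = (\<Sum>g\<in>S \<rightarrow>\<^sub>E V. ?W g * ?\<Phi> r g * (sum x V + \<theta> * card S + \<theta> * sum r V))"
    by (intro sum.cong refl) (simp only: total)
  finally show ?thesis
    unfolding urn_moment_def by (simp add: sum_distrib_left mult_ac)
qed

lemma prod_pochhammer_step_decrement:
  fixes \<theta> :: real and x :: "'v \<Rightarrow> real" and r :: "'v \<Rightarrow> nat"
  assumes "finite V" "y \<in> V" "r y > 0"
  shows "(x y + \<theta> * real (r y - 1)) * (\<Prod>j\<in>V. pochhammer_step \<theta> (x j) ((r(y := r y - 1)) j))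
       = (\<Prod>j\<in>V. pochhammer_step \<theta> (x j) (r j))"
proof -
  obtain q where q: "r y = Suc q"
    using assms(3) gr0_implies_Suc by blast
  show ?thesis
    using assms(1,2) by (simp add: prod.remove q pochhammer_step_Suc mult_ac)
qed

lemma sum_urn_moment_decrement:
  fixes \<theta> :: real and x :: "'v \<Rightarrow> real" and r :: "'v \<Rightarrow> nat" and G :: "nat \<Rightarrow> real"
  assumes "finite V"
    and factor: "\<And>r'. urn_moment \<theta> x V S r' = (\<Prod>j\<in>V. pochhammer_step \<theta> (x j) (r' j)) * G (sum r' V)"
  shows "(\<Sum>y\<in>V. r y * (x y + \<theta> * real (r y - 1)) * urn_moment \<theta> x V S (r(y := r y - 1)))
       = (\<Prod>j\<in>V. pochhammer_step \<theta> (x j) (r j)) * (sum r V * G (sum r V - 1))"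
proof -
  have "r y * (x y + \<theta> * real (r y - 1)) * urn_moment \<theta> x V S (r(y := r y - 1))
      = r y * ((\<Prod>j\<in>V. pochhammer_step \<theta> (x j) (r j)) * G (sum r V - 1))"
    if y: "y \<in> V" for y
  proof (cases "r y = 0")
    case False
    have "sum (r(y := r y - 1)) V = sum r V - 1"
      using y assms(1) False by (simp add: sum.remove)
    then show ?thesis
      unfolding factor using prod_pochhammer_step_decrement[OF assms(1) y, where r = r] False
      by (simp add: mult_ac)
  qed simp
  then have "(\<Sum>y\<in>V. r y * (x y + \<theta> * real (r y - 1)) * urn_moment \<theta> x V S (r(y := r y - 1)))
      = (\<Sum>y\<in>V. r y * ((\<Prod>j\<in>V. pochhammer_step \<theta> (x j) (r j)) * G (sum r V - 1)))"
    by (rule sum.cong[OF refl])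
  then show ?thesis
    by (simp add: sum_distrib_left sum_distrib_right mult_ac)
qed

text \<open>The closed form of urn_moment_eq satisfies the recurrence of urn_moment_insert.\<close>
lemma falling_factorial_pochhammer_step_recurrence:
  fixes \<theta> X :: real
  shows "falling_factorial (real (Suc m)) (Suc q) * pochhammer_step \<theta> (X + \<theta> * real (Suc q)) (Suc m - Suc q)
   = (X + \<theta> * m + \<theta> * Suc q) * (falling_factorial m (Suc q) * pochhammer_step \<theta> (X + \<theta> * real (Suc q)) (m - Suc q))
     + Suc q * (falling_factorial m q * pochhammer_step \<theta> (X + \<theta> * real q) (m - q))"
proof -
  consider "m < q" | "m = q" | d where "m = Suc q + d"
    by (metis add_Suc less_imp_Suc_add linorder_neqE_nat)
  then show ?thesis
  proof cases
    case 1
    then show ?thesis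
      using falling_factorial_eq_0[of "Suc m" "Suc q"] falling_factorial_eq_0[of m] by simp
  next
    case 2
    then show ?thesis
      using falling_factorial_Suc_left[of "real q" q] by (simp add: falling_factorial_eq_0 add.commute)
  next
    case 3
    have "m - q = Suc d" "Suc m - Suc q = Suc d" "m - Suc q = d"
      using 3 by simp_all
    moreover have "pochhammer_step \<theta> (X + \<theta> * real q) (Suc d)
        = (X + \<theta> * q) * pochhammer_step \<theta> (X + \<theta> * real (Suc q)) d"
      using pochhammer_step_add[of \<theta> "X + \<theta> * real q" 1 d] by (simp add: pochhammer_step_def algebra_simps)
    moreover have "pochhammer_step \<theta> (X + \<theta> * real (Suc q)) (Suc d)
        = pochhammer_step \<theta> (X + \<theta> * real (Suc q)) d * (X + \<theta> * m)"
      using 3 by (simp add: pochhammer_step_Suc algebra_simps)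
    moreover have "falling_factorial (real (Suc m)) (Suc q) = Suc m * falling_factorial m q"
      using falling_factorial_Suc_left[of "real m" q] by (simp add: add.commute)
    moreover have "falling_factorial m (Suc q) = falling_factorial m q * (real m - real q)"
      by (simp add: falling_factorial_Suc)
    ultimately show ?thesis
      using 3 by (simp add: algebra_simps)
  qed
qed

theorem urn_moment_eq:
  fixes \<theta> :: real and x :: "'v \<Rightarrow> real" and r :: "'v \<Rightarrow> nat"
  assumes "finite S" "finite V"
  shows "urn_moment \<theta> x V S r = (\<Prod>j\<in>V. pochhammer_step \<theta> (x j) (r j)) *
           (falling_factorial (card S) (sum r V) *
            pochhammer_step \<theta> (sum x V + \<theta> * sum r V) (card S - sum r V))"
  using assms(1)
proof (induction S arbitrary: r rule: finite_induct)
  case empty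
  show ?case
  proof (cases "\<exists>j\<in>V. r j > 0")
    case True
    then have "(\<Prod>j\<in>V. falling_factorial 0 (r j)) = 0" "sum r V > 0"
      using assms(2) falling_factorial_eq_0[of 0] by (auto intro: prod_zero sum_pos2)
    then show ?thesis
      using falling_factorial_eq_0[of 0 "sum r V"] by (simp add: urn_moment_def occupancy_def)
  qed (simp add: urn_moment_def occupancy_def)
next
  case (insert s S)
  define X where "X = sum x V"
  define m where "m = card S"
  define G where "G q = falling_factorial m q * pochhammer_step \<theta> (X + \<theta> * q) (m - q)" for q
  have IH: "urn_moment \<theta> x V S r' = (\<Prod>j\<in>V. pochhammer_step \<theta> (x j) (r' j)) * G (sum r' V)" for r'
    using insert.IH by (simp add: G_def X_def m_def)
  have "urn_moment \<theta> x V (insert s S) r = (X + \<theta> * m + \<theta> * sum r V) * urn_moment \<theta> x V S r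
      + (\<Sum>y\<in>V. r y * (x y + \<theta> * real (r y - 1)) * urn_moment \<theta> x V S (r(y := r y - 1)))"
    unfolding X_def m_def by (rule urn_moment_insert[OF insert.hyps(1) assms(2) insert.hyps(2)])
  also have "\<dots> = (\<Prod>j\<in>V. pochhammer_step \<theta> (x j) (r j))
      * ((X + \<theta> * m + \<theta> * sum r V) * G (sum r V) + sum r V * G (sum r V - 1))"
    by (subst sum_urn_moment_decrement[OF assms(2) IH]) (simp add: IH algebra_simps)
  also have "(X + \<theta> * m + \<theta> * sum r V) * G (sum r V) + sum r V * G (sum r V - 1)
      = falling_factorial (Suc m) (sum r V) * pochhammer_step \<theta> (X + \<theta> * sum r V) (Suc m - sum r V)"
  proof (cases "sum r V")
    case (Suc q)
    then show ?thesis
      using falling_factorial_pochhammer_step_recurrence[of m q \<theta> X] by (simp add: G_def algebra_simps)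
  qed (simp add: G_def pochhammer_step_Suc algebra_simps)
  finally show ?case
    using insert.hyps by (simp add: X_def m_def)
qed

section \<open>The collision count under the urn laws\<close>

text \<open>With \<theta> = 1 this is the law of M_{n,k}^a (prob_alpha_curry_arcs); with \<theta> = 0 it is the
  uniform law, for every a > 0 (prob_unif_curry_arcs).\<close>
definition polya_prob :: "real \<Rightarrow> real \<Rightarrow> nat \<Rightarrow> 's set \<Rightarrow> ('s \<Rightarrow> nat) \<Rightarrow> real" where
  "polya_prob \<theta> a n S f =
     (\<Prod>j\<in>{1..n}. pochhammer_step \<theta> a (occupancy S f j)) / pochhammer_step \<theta> (a * n) (card S)"

definition polya_mean :: "real \<Rightarrow> real \<Rightarrow> nat \<Rightarrow> 's set \<Rightarrow> (('s \<Rightarrow> nat) \<Rightarrow> real) \<Rightarrow> real" where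
  "polya_mean \<theta> a n S g = (\<Sum>f\<in>S \<rightarrow>\<^sub>E {1..n}. polya_prob \<theta> a n S f * g f)"

lemma polya_prob_nonneg:
  assumes "a > 0" "\<theta> \<ge> 0"
  shows "polya_prob \<theta> a n S f \<ge> 0"
  unfolding polya_prob_def using assms
  by (intro divide_nonneg_nonneg prod_nonneg pochhammer_step_nonneg) auto

lemma polya_mean_add: "polya_mean \<theta> a n S (\<lambda>f. g f + h f) = polya_mean \<theta> a n S g + polya_mean \<theta> a n S h"
  by (simp add: polya_mean_def distrib_left sum.distrib)

lemma polya_mean_cmult: "polya_mean \<theta> a n S (\<lambda>f. c * g f) = c * polya_mean \<theta> a n S g"
  by (simp add: polya_mean_def sum_distrib_left mult_ac)

lemma polya_mean_sum: "polya_mean \<theta> a n S (\<lambda>f. \<Sum>j\<in>J. g j f) = (\<Sum>j\<in>J. polya_mean \<theta> a n S (g j))"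
  unfolding polya_mean_def sum_distrib_left by (rule sum.swap)

lemma polya_mean_falling_factorials:
  assumes "finite S" "a > 0" "\<theta> \<ge> 0" "n \<ge> 1"
  shows "polya_mean \<theta> a n S (\<lambda>f. \<Prod>j\<in>{1..n}. falling_factorial (occupancy S f j) (r j))
       = (\<Prod>j\<in>{1..n}. pochhammer_step \<theta> a (r j)) * falling_factorial (card S) (sum r {1..n})
         / pochhammer_step \<theta> (a * n) (sum r {1..n})"
proof -
  define m where "m = card S"
  define R where "R = sum r {1..n}"
  have X_pos: "a * n > 0"
    using assms by simp
  have sum_a: "(\<Sum>j\<in>{1..n}. a) = a * n"
    by simp
  have "polya_mean \<theta> a n S (\<lambda>f. \<Prod>j\<in>{1..n}. falling_factorial (occupancy S f j) (r j))
      = (\<Prod>j\<in>{1..n}. pochhammer_step \<theta> a (r j))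
        * (falling_factorial m R * pochhammer_step \<theta> (a * n + \<theta> * R) (m - R))
        / pochhammer_step \<theta> (a * n) m"
    using urn_moment_eq[OF assms(1) finite_atLeastAtMost[of 1 n], where \<theta> = \<theta> and x = "\<lambda>_. a" and r = r]
    unfolding urn_moment_def polya_mean_def polya_prob_def sum_a m_def R_def
    by (simp add: mult_ac flip: sum_divide_distrib)
  also have "\<dots> = (\<Prod>j\<in>{1..n}. pochhammer_step \<theta> a (r j)) * falling_factorial m R
                  / pochhammer_step \<theta> (a * n) R"
  proof (cases "R \<le> m")
    case True
    then have "pochhammer_step \<theta> (a * n) m = pochhammer_step \<theta> (a * n) R * pochhammer_step \<theta> (a * n + \<theta> * R) (m - R)"
      using pochhammer_step_add[of \<theta> "a * n" R "m - R"] by simp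
    moreover have "pochhammer_step \<theta> (a * n + \<theta> * R) (m - R) > 0"
      using X_pos assms(3) by (intro pochhammer_step_pos add_pos_nonneg) auto
    ultimately show ?thesis by simp
  qed (simp add: falling_factorial_eq_0)
  finally show ?thesis
    by (simp add: m_def R_def)
qed

lemma polya_mean_one:
  assumes "finite S" "a > 0" "\<theta> \<ge> 0" "n \<ge> 1"
  shows "polya_mean \<theta> a n S (\<lambda>_. 1) = 1"
  using polya_mean_falling_factorials[OF assms, of "\<lambda>_. 0"] by simp

lemma polya_mean_falling_factorial:
  assumes "finite S" "a > 0" "\<theta> \<ge> 0" "n \<ge> 1" "j \<in> {1..n}"
  shows "polya_mean \<theta> a n S (\<lambda>f. falling_factorial (occupancy S f j) q)
       = pochhammer_step \<theta> a q * falling_factorial (card S) q / pochhammer_step \<theta> (a * n) q"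
proof -
  define r where "r i = (if i = j then q else 0)" for i
  have prod_r: "(\<Prod>i\<in>{1..n}. h i (r i)) = h j q" if "\<And>i. h i 0 = 1" for h :: "nat \<Rightarrow> nat \<Rightarrow> real"
    using prod.mono_neutral_right[of "{1..n}" "{j}" "\<lambda>i. h i (r i)"] assms(5) that
    by (simp add: r_def)
  have "(\<lambda>f. \<Prod>i\<in>{1..n}. falling_factorial (occupancy S f i) (r i)) = (\<lambda>f. falling_factorial (occupancy S f j) q)"
    "(\<Prod>i\<in>{1..n}. pochhammer_step \<theta> a (r i)) = pochhammer_step \<theta> a q"
    by (intro ext prod_r; simp)+
  moreover have "sum r {1..n} = q"
    using assms(5) by (simp add: r_def)
  ultimately show ?thesis
    using polya_mean_falling_factorials[OF assms(1-4), of r] by simp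
qed

lemma polya_mean_falling_factorial_pair:
  assumes "finite S" "a > 0" "\<theta> \<ge> 0" "n \<ge> 1" "j1 \<in> {1..n}" "j2 \<in> {1..n}" "j1 \<noteq> j2"
  shows "polya_mean \<theta> a n S
           (\<lambda>f. falling_factorial (occupancy S f j1) q1 * falling_factorial (occupancy S f j2) q2)
       = pochhammer_step \<theta> a q1 * pochhammer_step \<theta> a q2 * falling_factorial (card S) (q1 + q2)
         / pochhammer_step \<theta> (a * n) (q1 + q2)"
proof -
  define r where "r i = (if i = j1 then q1 else if i = j2 then q2 else 0)" for i
  have prod_r: "(\<Prod>i\<in>{1..n}. h i (r i)) = h j1 q1 * h j2 q2" if "\<And>i. h i 0 = 1" for h :: "nat \<Rightarrow> nat \<Rightarrow> real"
    using prod.mono_neutral_right[of "{1..n}" "{j1, j2}" "\<lambda>i. h i (r i)"] assms(5-7) that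
    by (auto simp: r_def)
  have "(\<lambda>f. \<Prod>i\<in>{1..n}. falling_factorial (occupancy S f i) (r i))
      = (\<lambda>f. falling_factorial (occupancy S f j1) q1 * falling_factorial (occupancy S f j2) q2)"
    "(\<Prod>i\<in>{1..n}. pochhammer_step \<theta> a (r i)) = pochhammer_step \<theta> a q1 * pochhammer_step \<theta> a q2"
    by (intro ext prod_r; simp)+
  moreover have "sum r {1..n} = q1 + q2"
    using sum.mono_neutral_right[of "{1..n}" "{j1, j2}" r] assms(5-7) by (auto simp: r_def)
  ultimately show ?thesis
    using polya_mean_falling_factorials[OF assms(1-4), of r] by (simp add: mult_ac)
qed

definition collisions :: "nat \<Rightarrow> 's set \<Rightarrow> ('s \<Rightarrow> nat) \<Rightarrow> real" where
  "collisions n S f = (\<Sum>j\<in>{1..n}. falling_factorial (occupancy S f j) 2)"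

context
  fixes \<theta> a :: real and n :: nat and S :: "'s set"
  assumes finite_S: "finite S" and a_pos: "a > 0" and \<theta>_nonneg: "\<theta> \<ge> 0" and n_pos: "n \<ge> 1"
begin

private abbreviation (input) "moment q \<equiv>
  pochhammer_step \<theta> a q * falling_factorial (card S) q / pochhammer_step \<theta> (a * n) q"

lemma polya_mean_collisions: "polya_mean \<theta> a n S (collisions n S) = n * moment 2"
  unfolding collisions_def polya_mean_sum
  by (simp add: polya_mean_falling_factorial[OF finite_S a_pos \<theta>_nonneg n_pos])

lemma polya_mean_collisions_square:
  "polya_mean \<theta> a n S (\<lambda>f. collisions n S f ^ 2)
   = n * (moment 4 + 4 * moment 3 + 2 * moment 2)
     + n * (real n - 1) * (pochhammer_step \<theta> a 2 ^ 2 * falling_factorial (card S) 4 / pochhammer_step \<theta> (a * n) 4)"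
proof -
  let ?F = "\<lambda>f j. falling_factorial (occupancy S f j) 2"
  have diagonal: "polya_mean \<theta> a n S (\<lambda>f. ?F f j * ?F f j) = moment 4 + 4 * moment 3 + 2 * moment 2"
    if "j \<in> {1..n}" for j
    unfolding falling_factorial_2_square polya_mean_add polya_mean_cmult
    using polya_mean_falling_factorial[OF finite_S a_pos \<theta>_nonneg n_pos that] by simp
  have row: "(\<Sum>j'\<in>{1..n}. polya_mean \<theta> a n S (\<lambda>f. ?F f j * ?F f j'))
      = moment 4 + 4 * moment 3 + 2 * moment 2
        + (real n - 1) * (pochhammer_step \<theta> a 2 ^ 2 * falling_factorial (card S) 4 / pochhammer_step \<theta> (a * n) 4)"
    if j: "j \<in> {1..n}" for j
  proof -
    have "(\<Sum>j'\<in>{1..n} - {j}. polya_mean \<theta> a n S (\<lambda>f. ?F f j * ?F f j'))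
        = (\<Sum>j'\<in>{1..n} - {j}. pochhammer_step \<theta> a 2 ^ 2 * falling_factorial (card S) 4 / pochhammer_step \<theta> (a * n) 4)"
      using polya_mean_falling_factorial_pair[OF finite_S a_pos \<theta>_nonneg n_pos j, of _ 2 2]
      by (intro sum.cong) (auto simp: power2_eq_square)
    then show ?thesis
      using j diagonal[OF j] by (simp add: sum.remove of_nat_diff)
  qed
  have "polya_mean \<theta> a n S (\<lambda>f. collisions n S f ^ 2)
      = (\<Sum>j\<in>{1..n}. \<Sum>j'\<in>{1..n}. polya_mean \<theta> a n S (\<lambda>f. ?F f j * ?F f j'))"
    unfolding collisions_def power2_eq_square sum_product polya_mean_sum ..
  also have "\<dots> = (\<Sum>j\<in>{1..n}. moment 4 + 4 * moment 3 + 2 * moment 2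
        + (real n - 1) * (pochhammer_step \<theta> a 2 ^ 2 * falling_factorial (card S) 4 / pochhammer_step \<theta> (a * n) 4))"
    by (intro sum.cong refl row)
  finally show ?thesis
    by (simp add: algebra_simps)
qed

end

lemma polya_factorial_moment_le:
  fixes \<theta> a :: real and m n :: nat
  assumes "0 \<le> \<theta>" "\<theta> \<le> a" "a > 0" "n \<ge> 1"
  shows "pochhammer_step \<theta> a q * falling_factorial m q / pochhammer_step \<theta> (a * n) q \<le> fact q * (m / n) ^ q"
proof -
  have "pochhammer_step \<theta> a q / pochhammer_step \<theta> (a * n) q * falling_factorial m q \<le> fact q / real n ^ q * real m ^ q"
    using pochhammer_step_ratio_le[OF assms, of q] falling_factorial_le_power falling_factorial_nonneg
    by (intro mult_mono) simp_all
  then show ?thesis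
    by (simp add: power_divide)
qed

lemma polya_pair_moment_le:
  fixes \<theta> a :: real and m n :: nat
  assumes "0 \<le> \<theta>" "a > 0" "n \<ge> 1"
  shows "(real n - 1) * (pochhammer_step \<theta> a 2 ^ 2 * falling_factorial m 4 / pochhammer_step \<theta> (a * n) 4)
       \<le> real n * (pochhammer_step \<theta> a 2 * falling_factorial m 2 / pochhammer_step \<theta> (a * n) 2) ^ 2"
proof -
  have X_pos: "a * n > 0"
    using assms by simp
  have "pochhammer_step \<theta> a 2 ^ 2 * falling_factorial m 4 / pochhammer_step \<theta> (a * n) 4
      \<le> pochhammer_step \<theta> a 2 ^ 2 * falling_factorial m 2 ^ 2 / pochhammer_step \<theta> (a * n) 2 ^ 2"
    using assms(1,2) X_pos pochhammer_step_pos[OF X_pos assms(1), of 2]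
    by (intro frac_le mult_left_mono falling_factorial_4_le_square pochhammer_step_2_square_le
        mult_nonneg_nonneg falling_factorial_nonneg) auto
  also have "\<dots> = (pochhammer_step \<theta> a 2 * falling_factorial m 2 / pochhammer_step \<theta> (a * n) 2) ^ 2"
    by (simp add: power_divide power_mult_distrib)
  finally have "(real n - 1) * (pochhammer_step \<theta> a 2 ^ 2 * falling_factorial m 4 / pochhammer_step \<theta> (a * n) 4)
      \<le> (real n - 1) * (pochhammer_step \<theta> a 2 * falling_factorial m 2 / pochhammer_step \<theta> (a * n) 2) ^ 2"
    using assms(3) by (intro mult_left_mono) auto
  then show ?thesis
    by (smt (verit) mult_right_mono zero_le_power2)
qed

lemma polya_variance_collisions_le:
  assumes "finite S" "0 \<le> \<theta>" "\<theta> \<le> a" "a > 0" "n \<ge> 1"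
  defines "\<rho> \<equiv> card S / real n"
  shows "polya_mean \<theta> a n S (\<lambda>f. collisions n S f ^ 2) - polya_mean \<theta> a n S (collisions n S) ^ 2
       \<le> n * (24 * \<rho> ^ 4 + 24 * \<rho> ^ 3 + 4 * \<rho> ^ 2)"
proof -
  define \<mu> where "\<mu> q = pochhammer_step \<theta> a q * falling_factorial (card S) q / pochhammer_step \<theta> (a * n) q" for q
  define \<nu> where "\<nu> = pochhammer_step \<theta> a 2 ^ 2 * falling_factorial (card S) 4 / pochhammer_step \<theta> (a * n) 4"
  have "real n * ((real n - 1) * \<nu>) \<le> real n * (real n * \<mu> 2 ^ 2)"
    using polya_pair_moment_le[OF assms(2,4,5), of "card S"] unfolding \<mu>_def \<nu>_def
    by (intro mult_left_mono) auto
  moreover have "polya_mean \<theta> a n S (collisions n S) = n * \<mu> 2"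
    "polya_mean \<theta> a n S (\<lambda>f. collisions n S f ^ 2) = n * (\<mu> 4 + 4 * \<mu> 3 + 2 * \<mu> 2) + n * (real n - 1) * \<nu>"
    using polya_mean_collisions[OF assms(1,4,2,5)] polya_mean_collisions_square[OF assms(1,4,2,5)]
    unfolding \<mu>_def \<nu>_def .
  ultimately have "polya_mean \<theta> a n S (\<lambda>f. collisions n S f ^ 2) - polya_mean \<theta> a n S (collisions n S) ^ 2
      \<le> n * (\<mu> 4 + 4 * \<mu> 3 + 2 * \<mu> 2)"
    by (simp add: power2_eq_square mult_ac)
  also have "\<dots> \<le> n * (24 * \<rho> ^ 4 + 24 * \<rho> ^ 3 + 4 * \<rho> ^ 2)"
    using polya_factorial_moment_le[OF assms(2-5), where m = "card S" and q = 4]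
      polya_factorial_moment_le[OF assms(2-5), where m = "card S" and q = 3]
      polya_factorial_moment_le[OF assms(2-5), where m = "card S" and q = 2]
    by (intro mult_left_mono add_mono) (auto simp: \<mu>_def \<rho>_def fact_numeral)
  finally show ?thesis .
qed

lemma polya_variance_collisions_le_52:
  assumes "finite S" "card S = k * n" "k \<ge> 1" "0 \<le> \<theta>" "\<theta> \<le> a" "a > 0" "n \<ge> 1"
  shows "polya_mean \<theta> a n S (\<lambda>f. collisions n S f ^ 2) - polya_mean \<theta> a n S (collisions n S) ^ 2
       \<le> 52 * real k ^ 4 * n"
proof -
  have "24 * real k ^ 4 + 24 * real k ^ 3 + 4 * real k ^ 2 \<le> 52 * real k ^ 4"
    using assms(3) power_increasing[of 3 4 "real k"] power_increasing[of 2 4 "real k"] by simp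
  then have "real n * (24 * real k ^ 4 + 24 * real k ^ 3 + 4 * real k ^ 2) \<le> 52 * real k ^ 4 * n"
    by (subst mult.commute) (rule mult_right_mono, simp_all)
  moreover have "polya_mean \<theta> a n S (\<lambda>f. collisions n S f ^ 2) - polya_mean \<theta> a n S (collisions n S) ^ 2
      \<le> real n * (24 * real k ^ 4 + 24 * real k ^ 3 + 4 * real k ^ 2)"
    using polya_variance_collisions_le[OF assms(1,4-7)] assms(2,7) by simp
  ultimately show ?thesis
    by linarith
qed

lemma polya_collisions_mean_gap:
  assumes "finite S" "card S \<ge> 2" "a \<ge> 1" "n \<ge> 2"
  shows "polya_mean 1 a n S (collisions n S) - polya_mean 0 a n S (collisions n S) \<ge> card S ^ 2 / (8 * a * n)"
proof -
  define m where "m = real (card S)"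
  have a_pos: "a > 0" and n_pos: "real n > 0" and X_pos: "a * n + 1 > 0"
    using assms by (auto intro: add_pos_nonneg)
  have gap: "polya_mean 1 a n S (collisions n S) - polya_mean 0 a n S (collisions n S)
      = falling_factorial m 2 * (real n - 1) / (real n * (a * n + 1))"
  proof -
    have n1: "n \<ge> 1"
      using assms(4) by simp
    have "polya_mean 1 a n S (collisions n S) = n * (a * (a + 1) * falling_factorial m 2 / (a * n * (a * n + 1)))"
      using polya_mean_collisions[OF assms(1) a_pos zero_le_one n1]
      by (simp add: pochhammer_step_def eval_nat_numeral m_def)
    also have "\<dots> = falling_factorial m 2 * (a + 1) / (a * n + 1)"
      using a_pos n_pos X_pos by (simp add: divide_simps)
    finally have polya: "polya_mean 1 a n S (collisions n S) = falling_factorial m 2 * (a + 1) / (a * n + 1)" .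
    have "polya_mean 0 a n S (collisions n S) = n * (a ^ 2 * falling_factorial m 2 / (a * n) ^ 2)"
      using polya_mean_collisions[OF assms(1) a_pos order_refl n1]
      by (simp add: pochhammer_step_zero m_def)
    also have "\<dots> = falling_factorial m 2 / n"
      using a_pos n_pos by (simp add: divide_simps power2_eq_square)
    finally have uniform: "polya_mean 0 a n S (collisions n S) = falling_factorial m 2 / n" .
    show ?thesis
      unfolding polya uniform using n_pos X_pos by (simp add: divide_simps) (simp add: algebra_simps)
  qed
  have "1 * 1 \<le> a * n"
    using assms by (intro mult_mono) auto
  then have "real n / 2 \<le> real n - 1" "a * n + 1 \<le> 2 * a * n"
    using assms by simp_all
  moreover have "m ^ 2 / 2 \<le> falling_factorial m 2" "0 \<le> falling_factorial m 2"
    using assms(2) falling_factorial_nonneg[of "card S" 2]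
    by (simp_all add: m_def falling_factorial_def eval_nat_numeral power2_eq_square field_simps)
  ultimately have "(m ^ 2 / 2) * (real n / 2) / (real n * (2 * a * n))
      \<le> falling_factorial m 2 * (real n - 1) / (real n * (a * n + 1))"
    using a_pos n_pos X_pos
    by (intro frac_le mult_mono mult_pos_pos mult_left_mono) auto
  then show ?thesis
    using a_pos n_pos unfolding gap by (simp add: m_def field_simps power2_eq_square)
qed

section \<open>The second moment method\<close>

lemma sum_deviation_le_variance:
  fixes p T :: "'a \<Rightarrow> real"
  assumes "finite \<Omega>" "\<And>x. x \<in> \<Omega> \<Longrightarrow> p x \<ge> 0" "sum p \<Omega> = 1" "\<delta> > 0"
  defines "\<mu> \<equiv> \<Sum>x\<in>\<Omega>. p x * T x"
  shows "sum p {x \<in> \<Omega>. \<delta> \<le> \<bar>T x - \<mu>\<bar>} \<le> ((\<Sum>x\<in>\<Omega>. p x * T x ^ 2) - \<mu> ^ 2) / \<delta> ^ 2"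
proof -
  have "sum p {x \<in> \<Omega>. \<delta> \<le> \<bar>T x - \<mu>\<bar>} = (\<Sum>x\<in>\<Omega>. p x * (if \<delta> \<le> \<bar>T x - \<mu>\<bar> then 1 else 0))"
    using assms(1) by (auto simp: sum.inter_filter intro!: sum.cong)
  also have "\<dots> \<le> (\<Sum>x\<in>\<Omega>. p x * ((T x - \<mu>) ^ 2 / \<delta> ^ 2))"
  proof (intro sum_mono mult_left_mono assms(2))
    fix x
    show "(if \<delta> \<le> \<bar>T x - \<mu>\<bar> then 1 else 0) \<le> (T x - \<mu>) ^ 2 / \<delta> ^ 2"
      using assms(4) power_mono[of \<delta> "\<bar>T x - \<mu>\<bar>" 2] by auto
  qed
  also have "\<dots> = ((\<Sum>x\<in>\<Omega>. p x * T x ^ 2) - 2 * \<mu> * (\<Sum>x\<in>\<Omega>. p x * T x) + \<mu> ^ 2 * sum p \<Omega>) / \<delta> ^ 2"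
    by (simp add: power2_eq_square algebra_simps sum.distrib sum_subtractf sum_distrib_left flip: sum_divide_distrib)
  finally show ?thesis
    using assms(3) by (simp add: power2_eq_square flip: \<mu>_def)
qed

lemma second_moment_separation:
  fixes p q T :: "'a \<Rightarrow> real"
  assumes "finite \<Omega>" "\<And>x. x \<in> \<Omega> \<Longrightarrow> p x \<ge> 0" "\<And>x. x \<in> \<Omega> \<Longrightarrow> q x \<ge> 0"
    "sum p \<Omega> = 1" "sum q \<Omega> = 1"
  defines "\<mu>p \<equiv> \<Sum>x\<in>\<Omega>. p x * T x" and "\<mu>q \<equiv> \<Sum>x\<in>\<Omega>. q x * T x"
  defines "Vp \<equiv> (\<Sum>x\<in>\<Omega>. p x * T x ^ 2) - \<mu>p ^ 2" and "Vq \<equiv> (\<Sum>x\<in>\<Omega>. q x * T x ^ 2) - \<mu>q ^ 2"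
  assumes "\<mu>q < \<mu>p"
  shows "sum p {x \<in> \<Omega>. (\<mu>p + \<mu>q) / 2 \<le> T x} - sum q {x \<in> \<Omega>. (\<mu>p + \<mu>q) / 2 \<le> T x}
       \<ge> 1 - 4 * (Vp + Vq) / (\<mu>p - \<mu>q) ^ 2"
proof -
  define \<delta> where "\<delta> = (\<mu>p - \<mu>q) / 2"
  define A where "A = {x \<in> \<Omega>. (\<mu>p + \<mu>q) / 2 \<le> T x}"
  have \<delta>_pos: "\<delta> > 0"
    using assms(10) by (simp add: \<delta>_def)
  have "sum p (\<Omega> - A) \<le> sum p {x \<in> \<Omega>. \<delta> \<le> \<bar>T x - \<mu>p\<bar>}"
    using assms(1,2) by (intro sum_mono2) (auto simp: A_def \<delta>_def abs_if)
  also have "\<dots> \<le> Vp / \<delta> ^ 2"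
    unfolding Vp_def \<mu>p_def by (rule sum_deviation_le_variance[OF assms(1,2,4) \<delta>_pos])
  finally have p_A: "sum p A \<ge> 1 - Vp / \<delta> ^ 2"
    using assms(1,4) sum.subset_diff[of A \<Omega> p] by (auto simp: A_def)
  have "sum q A \<le> sum q {x \<in> \<Omega>. \<delta> \<le> \<bar>T x - \<mu>q\<bar>}"
    using assms(1,3) by (intro sum_mono2) (auto simp: A_def \<delta>_def abs_if)
  also have "\<dots> \<le> Vq / \<delta> ^ 2"
    unfolding Vq_def \<mu>q_def by (rule sum_deviation_le_variance[OF assms(1,3,5) \<delta>_pos])
  finally have "sum p A - sum q A \<ge> 1 - (Vp + Vq) / \<delta> ^ 2"
    using p_A by (simp add: add_divide_distrib)
  then show ?thesis
    by (simp add: A_def \<delta>_def power_divide algebra_simps)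
qed

lemma polya_uniform_separation:
  assumes "finite S" "card S = k * n" "n \<ge> 2" "k \<ge> 1" "a \<ge> 1"
  shows "\<exists>A \<subseteq> S \<rightarrow>\<^sub>E {1..n}.
           sum (polya_prob 1 a n S) A - sum (polya_prob 0 a n S) A \<ge> 1 - 26624 * a ^ 2 / n"
proof -
  let ?\<Omega> = "S \<rightarrow>\<^sub>E {1..n}"
  let ?T = "collisions n S"
  define \<mu>p where "\<mu>p = polya_mean 1 a n S ?T"
  define \<mu>q where "\<mu>q = polya_mean 0 a n S ?T"
  define Vp where "Vp = polya_mean 1 a n S (\<lambda>f. ?T f ^ 2) - \<mu>p ^ 2"
  define Vq where "Vq = polya_mean 0 a n S (\<lambda>f. ?T f ^ 2) - \<mu>q ^ 2"
  have a_pos: "a > 0" and n1: "n \<ge> 1" and n_pos: "real n > 0" and k_pos: "real k > 0"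
    using assms by auto
  have "2 * 1 \<le> n * k"
    using assms by (intro mult_mono) auto
  then have "real k ^ 2 * n / (8 * a) \<le> \<mu>p - \<mu>q"
    using polya_collisions_mean_gap[OF assms(1) _ assms(5,3)] assms(2) n_pos
    by (simp add: \<mu>p_def \<mu>q_def power2_eq_square mult_ac)
  moreover have gap_pos: "real k ^ 2 * n / (8 * a) > 0"
    using a_pos n_pos k_pos by simp
  moreover have "Vp + Vq \<le> 104 * real k ^ 4 * n"
    using polya_variance_collisions_le_52[OF assms(1,2,4) _ _ a_pos n1, of 1]
      polya_variance_collisions_le_52[OF assms(1,2,4) _ _ a_pos n1, of 0] assms(5)
    by (simp add: Vp_def Vq_def \<mu>p_def \<mu>q_def)
  ultimately have "4 * (Vp + Vq) / (\<mu>p - \<mu>q) ^ 2 \<le> 4 * (104 * real k ^ 4 * n) / (real k ^ 2 * n / (8 * a)) ^ 2"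
    using k_pos n_pos by (intro frac_le power_mono) auto
  also have "\<dots> = 26624 * a ^ 2 / n"
    using a_pos n_pos k_pos by (simp add: field_simps power2_eq_square eval_nat_numeral)
  finally have bound: "4 * (Vp + Vq) / (\<mu>p - \<mu>q) ^ 2 \<le> 26624 * a ^ 2 / n" .
  have "\<mu>q < \<mu>p"
    using \<open>real k ^ 2 * n / (8 * a) \<le> \<mu>p - \<mu>q\<close> gap_pos by linarith
  then have "sum (polya_prob 1 a n S) {f \<in> ?\<Omega>. (\<mu>p + \<mu>q) / 2 \<le> ?T f}
      - sum (polya_prob 0 a n S) {f \<in> ?\<Omega>. (\<mu>p + \<mu>q) / 2 \<le> ?T f} \<ge> 1 - 4 * (Vp + Vq) / (\<mu>p - \<mu>q) ^ 2"
    using second_moment_separation[of ?\<Omega> "polya_prob 1 a n S" "polya_prob 0 a n S" ?T]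
      polya_mean_one[OF assms(1) a_pos _ n1] assms(1) a_pos
    by (simp add: finite_PiE polya_prob_nonneg polya_mean_def \<mu>p_def \<mu>q_def Vp_def Vq_def)
  then show ?thesis
    using bound by (intro exI[of _ "{f \<in> ?\<Omega>. (\<mu>p + \<mu>q) / 2 \<le> ?T f}"]) auto
qed

section \<open>k-out maps as urn assignments\<close>

lemma bij_betw_curry_PiE:
  "bij_betw (\<lambda>f. \<lambda>i\<in>I. \<lambda>l\<in>L. f (i, l)) (I \<times> L \<rightarrow>\<^sub>E V) (I \<rightarrow>\<^sub>E (L \<rightarrow>\<^sub>E V))"
  by (rule bij_betwI[where g = "\<lambda>M. \<lambda>p\<in>I \<times> L. M (fst p) (snd p)"])
    (auto simp: PiE_iff extensional_def fun_eq_iff)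

definition arcs :: "nat \<Rightarrow> nat \<Rightarrow> (nat \<times> nat) set" where
  "arcs n k = {1..n} \<times> {1..k}"

definition curry_arcs :: "nat \<Rightarrow> nat \<Rightarrow> (nat \<times> nat \<Rightarrow> nat) \<Rightarrow> nat \<Rightarrow> nat \<Rightarrow> nat" where
  "curry_arcs n k f = (\<lambda>i\<in>{1..n}. \<lambda>l\<in>{1..k}. f (i, l))"

lemma finite_arcs [simp]: "finite (arcs n k)"
  by (simp add: arcs_def)

lemma card_arcs: "card (arcs n k) = k * n"
  by (simp add: arcs_def)

lemma sum_kout_maps:
  "sum g (kout_maps n k) = (\<Sum>f\<in>arcs n k \<rightarrow>\<^sub>E {1..n}. g (curry_arcs n k f))"
  using sum.reindex_bij_betw[OF bij_betw_curry_PiE[where I = "{1..n}" and L = "{1..k}" and V = "{1..n}"], of g]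
  by (simp add: kout_maps_def arcs_def curry_arcs_def)

lemma indeg_curry_arcs: "indeg n k (curry_arcs n k f) j = occupancy (arcs n k) f j"
proof -
  have "{(i, l). i \<in> {1..n} \<and> l \<in> {1..k} \<and> curry_arcs n k f i l = j} = {p \<in> arcs n k. f p = j}"
    by (auto simp: arcs_def curry_arcs_def)
  then show ?thesis
    by (simp add: indeg_def occupancy_def)
qed

lemma prob_alpha_curry_arcs: "prob_alpha n k a (curry_arcs n k f) = polya_prob 1 a n (arcs n k) f"
  by (simp add: prob_alpha_def polya_prob_def indeg_curry_arcs pochhammer_step_one card_arcs)

lemma prob_unif_curry_arcs:
  assumes "a > 0" "f \<in> arcs n k \<rightarrow>\<^sub>E {1..n}"
  shows "prob_unif n k (curry_arcs n k f) = polya_prob 0 a n (arcs n k) f"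
proof -
  have "(\<Prod>j\<in>{1..n}. a ^ occupancy (arcs n k) f j) = a ^ (k * n)"
    using sum_occupancy[OF finite_arcs finite_atLeastAtMost assms(2)]
    by (simp add: power_sum[symmetric] card_arcs)
  then show ?thesis
    using assms(1) by (simp add: prob_unif_def polya_prob_def pochhammer_step_zero card_arcs power_mult_distrib)
qed

lemma prob_alpha_nonneg: "n \<ge> 1 \<Longrightarrow> a > 0 \<Longrightarrow> prob_alpha n k a M \<ge> 0"
  unfolding prob_alpha_def by (intro divide_nonneg_nonneg prod_nonneg pochhammer_nonneg) auto

lemma sum_prob_alpha: "n \<ge> 1 \<Longrightarrow> a > 0 \<Longrightarrow> sum (prob_alpha n k a) (kout_maps n k) = 1"
  using polya_mean_one[of "arcs n k" a 1 n]
  by (simp add: sum_kout_maps prob_alpha_curry_arcs polya_mean_def)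

lemma sum_prob_unif: "n \<ge> 1 \<Longrightarrow> sum (prob_unif n k) (kout_maps n k) = 1"
  by (simp add: prob_unif_def kout_maps_def card_PiE power_mult)

lemma abs_sum_prob_diff_le_1:
  assumes "n \<ge> 1" "a > 0" "B \<subseteq> kout_maps n k"
  shows "\<bar>sum (prob_alpha n k a) B - sum (prob_unif n k) B\<bar> \<le> 1"
proof -
  have fin: "finite (kout_maps n k)"
    by (simp add: kout_maps_def finite_PiE)
  have "sum (prob_alpha n k a) B \<le> sum (prob_alpha n k a) (kout_maps n k)"
    "sum (prob_unif n k) B \<le> sum (prob_unif n k) (kout_maps n k)"
    using assms(3) fin prob_alpha_nonneg[OF assms(1,2)]
    by (auto intro!: sum_mono2 simp: prob_unif_def simp del: sum_constant)
  moreover have "0 \<le> sum (prob_alpha n k a) B" "0 \<le> sum (prob_unif n k) B"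
    using prob_alpha_nonneg[OF assms(1,2)] by (auto intro!: sum_nonneg simp: prob_unif_def)
  ultimately show ?thesis
    unfolding abs_le_iff using sum_prob_alpha[OF assms(1,2), of k] sum_prob_unif[OF assms(1), of k] by linarith
qed

lemma abs_sum_diff_le_dTV:
  assumes "n \<ge> 1" "a > 0" "B \<subseteq> kout_maps n k"
  shows "\<bar>sum (prob_alpha n k a) B - sum (prob_unif n k) B\<bar> \<le> dTV n k a"
  unfolding dTV_def
  by (rule cSup_upper) (use assms abs_sum_prob_diff_le_1[OF assms(1,2)] in \<open>auto intro!: bdd_aboveI\<close>)

lemma dTV_le_1:
  assumes "n \<ge> 1" "a > 0"
  shows "dTV n k a \<le> 1"
  unfolding dTV_def
  by (rule cSup_least) (use abs_sum_prob_diff_le_1[OF assms] in auto)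

lemma dTV_lower_bound:
  assumes "n \<ge> 2" "k \<ge> 1" "a \<ge> 1"
  shows "1 - 26624 * a ^ 2 / n \<le> dTV n k a"
proof -
  have a_pos: "a > 0" and n1: "n \<ge> 1"
    using assms by auto
  obtain A where A: "A \<subseteq> arcs n k \<rightarrow>\<^sub>E {1..n}"
    and sep: "sum (polya_prob 1 a n (arcs n k)) A - sum (polya_prob 0 a n (arcs n k)) A \<ge> 1 - 26624 * a ^ 2 / n"
    using polya_uniform_separation[OF finite_arcs card_arcs assms] by blast
  have bij: "bij_betw (curry_arcs n k) (arcs n k \<rightarrow>\<^sub>E {1..n}) (kout_maps n k)"
    unfolding arcs_def curry_arcs_def[abs_def] kout_maps_def by (rule bij_betw_curry_PiE)
  then have inj: "inj_on (curry_arcs n k) A"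
    using A bij_betw_imp_inj_on inj_on_subset by blast
  have "curry_arcs n k ` A \<subseteq> kout_maps n k"
    using image_mono[OF A, of "curry_arcs n k"] bij_betw_imp_surj_on[OF bij] by simp
  then have "sum (prob_alpha n k a) (curry_arcs n k ` A) - sum (prob_unif n k) (curry_arcs n k ` A) \<le> dTV n k a"
    using abs_sum_diff_le_dTV[OF n1 a_pos] abs_ge_self order_trans by blast
  moreover have "sum (prob_alpha n k a) (curry_arcs n k ` A) = sum (polya_prob 1 a n (arcs n k)) A"
    by (simp add: sum.reindex[OF inj] prob_alpha_curry_arcs)
  moreover have "sum (prob_unif n k) (curry_arcs n k ` A) = sum (polya_prob 0 a n (arcs n k)) A"
    using A by (simp add: sum.reindex[OF inj] prob_unif_curry_arcs[OF a_pos] subset_iff)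
  ultimately show ?thesis
    using sep by linarith
qed

theorem theorem1:
  fixes k :: nat and \<alpha> :: "nat \<Rightarrow> real"
  assumes "k \<ge> 1"
    and "\<And>n. \<alpha> n > 0"
    and "filterlim \<alpha> at_top sequentially"
    and "(\<lambda>n. \<alpha> n / sqrt (real n)) \<longlonglongrightarrow> 0"
  shows "(\<lambda>n. dTV n k (\<alpha> n)) \<longlonglongrightarrow> 1"
proof (rule tendsto_sandwich[where f = "\<lambda>n. 1 - 26624 * (\<alpha> n / sqrt (real n)) ^ 2" and h = "\<lambda>_. 1"])
  have eventually_large: "\<forall>\<^sub>F n in sequentially. \<alpha> n \<ge> 1 \<and> n \<ge> 2"
    using assms(3) by (auto simp: filterlim_at_top intro: eventually_conj eventually_ge_at_top)
  then show "\<forall>\<^sub>F n in sequentially. 1 - 26624 * (\<alpha> n / sqrt (real n)) ^ 2 \<le> dTV n k (\<alpha> n)"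
    by eventually_elim (use dTV_lower_bound assms(1) in \<open>simp add: power_divide\<close>)
  show "\<forall>\<^sub>F n in sequentially. dTV n k (\<alpha> n) \<le> 1"
    using eventually_large by eventually_elim (use dTV_le_1 assms(2) in simp)
  show "(\<lambda>n. 1 - 26624 * (\<alpha> n / sqrt (real n)) ^ 2) \<longlonglongrightarrow> 1"
    using tendsto_diff[OF tendsto_const tendsto_mult[OF tendsto_const tendsto_power[OF assms(4)]], of 1 26624 2]
    by simp
qed simp

end
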